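(* Let $a=\{a_k\}_{k=0}^\infty$ be a real sequence with $1=a_0>a_1\geq a_2\geq\cdots\geq a_{k-1}\geq a_k\geq\cdots$, $\lim_{k\to\infty}a_k=0$, and $\sum_{k=0}^\infty a_k=\infty$. Define $\{b_k\}_{k=0}^\infty$ by $b_0=1/a_0$ and $b_k=-\frac{1}{a_0}\sum_{j=0}^{k-1}a_{k-j}b_j$ for $k\geq1$. Then $\lim_{k\to\infty}b_k=0$.
   Context: The sequence $\{b_k\}$ gives the entries of the inverse $B=A^{-1}$ of the half-infinite lower triangular Toeplitz matrix $A$ with entries $A_{ij}=a_{i-j}$ for $i\geq j$ (and $0$ otherwise). *)

theory Defs
  imports "HOL-Analysis.Analysis"
begin

text \<open>The sequence b: b_0 = 1/a_0, b_k = -(1/a_0) * sum_{j<k} a_(k-j) b_j for k >= 1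
  (entries of the inverse of the lower triangular Toeplitz matrix with entries a_(i-j)).\<close>
function inv_toeplitz_seq :: "(nat \<Rightarrow> real) \<Rightarrow> nat \<Rightarrow> real" where
  "inv_toeplitz_seq a k =
     (if k = 0 then 1 / a 0
      else - (1 / a 0) * (\<Sum>j<k. a (k - j) * inv_toeplitz_seq a j))"
  by auto
termination
  by (relation "Wellfounded.measure snd") auto

declare inv_toeplitz_seq.simps [simp del]

end

theory Submission
  imports Defs "HOL-Computational_Algebra.Formal_Power_Series"
begin

text \<open>In power series terms \<open>B = 1/A\<close>, so the partial sums \<open>u n = b 0 + \<dots> + b n\<close> are the
  coefficients of \<open>1/((1 - x) A(x))\<close>, i.e. \<open>\<Sum>i\<le>n. a i * u (n - i) = 1\<close>. Equivalently \<open>u\<close> is a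
  renewal sequence, \<open>u (m + 1) = \<Sum>i\<le>m. f i * u (m - i)\<close> with probability weights
  \<open>f i = a i - a (i + 1)\<close>, hence \<open>0 \<le> u \<le> 1\<close>. As the weight \<open>f 0\<close> of the previous value is positive,
  values of \<open>u\<close> near its upper limit \<open>L\<close> propagate backwards over arbitrarily long windows; on
  such a window the identity gives \<open>L/2 * (\<Sum>i<K. a i) \<le> 1\<close>, so divergence of \<open>\<Sum> a\<close> forces
  \<open>L = 0\<close>. Thus \<open>u \<longlonglongrightarrow> 0\<close>, and so does its difference sequence \<open>b\<close>.\<close>

lemma Abs_fps_mult_inv_toeplitz_seq:
  fixes a :: "nat \<Rightarrow> real"
  assumes a0: "a 0 \<noteq> 0"
  shows "Abs_fps a * Abs_fps (inv_toeplitz_seq a) = 1"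
proof (rule fps_ext)
  fix k
  let ?b = "inv_toeplitz_seq a"
  have "(\<Sum>j\<le>k. a (k - j) * ?b j) = (\<Sum>j<k. a (k - j) * ?b j) + a 0 * ?b k"
    by (simp add: lessThan_Suc_atMost[symmetric])
  also have "\<dots> = (if k = 0 then 1 else 0)"
    using a0 by (subst (2) inv_toeplitz_seq.simps) auto
  finally have "(\<Sum>j\<le>k. a (k - j) * ?b j) = (if k = 0 then 1 else 0)" .
  moreover have "(\<Sum>i=0..k. a i * ?b (k - i)) = (\<Sum>j\<le>k. a (k - j) * ?b j)"
    by (subst sum.atLeastAtMost_rev) (simp add: atLeast0AtMost)
  ultimately show "fps_nth (Abs_fps a * Abs_fps ?b) k = fps_nth 1 k"
    by (simp add: fps_mult_nth)
qed

lemma convolution_partial_sums_inv_toeplitz_seq: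
  fixes a :: "nat \<Rightarrow> real"
  assumes "a 0 \<noteq> 0"
  shows "(\<Sum>i\<le>n. a i * (\<Sum>j\<le>n - i. inv_toeplitz_seq a j)) = 1"
proof -
  define ones :: "real fps" where "ones = Abs_fps (\<lambda>_. 1)"
  have "Abs_fps a * (Abs_fps (inv_toeplitz_seq a) * ones) = ones"
    by (metis Abs_fps_mult_inv_toeplitz_seq assms mult.assoc mult_1)
  then have "fps_nth (Abs_fps a * (Abs_fps (inv_toeplitz_seq a) * ones)) n = fps_nth ones n"
    by (rule arg_cong)
  then show ?thesis
    by (simp add: fps_mult_nth ones_def atLeast0AtMost)
qed

lemma nonneg_bounded_seq_limsup:
  fixes u :: "nat \<Rightarrow> real"
  assumes nonneg: "\<And>n. 0 \<le> u n" and bdd: "bdd_above (range u)"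
  obtains L where "L \<ge> 0"
    and "\<And>e. e > 0 \<Longrightarrow> eventually (\<lambda>n. u n \<le> L + e) sequentially"
    and "\<And>e. e > 0 \<Longrightarrow> frequently (\<lambda>n. L - e < u n) sequentially"
proof
  define S where "S = {s. eventually (\<lambda>n. u n \<le> s) sequentially}"
  have S_nonneg: "s \<ge> 0" if "s \<in> S" for s
    using that nonneg by (auto simp: S_def eventually_sequentially intro: order_trans)
  have "S \<noteq> {}"
    using bdd by (auto simp: S_def bdd_above_def intro: always_eventually)
  moreover have bdd_S: "bdd_below S"
    using S_nonneg by (auto simp: bdd_below_def)
  ultimately show "Inf S \<ge> 0"
    using S_nonneg by (intro cInf_greatest) auto
  show "eventually (\<lambda>n. u n \<le> Inf S + e) sequentially" if "e > 0" for e
  proof -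
    obtain s where "s \<in> S" "s < Inf S + e"
      using \<open>S \<noteq> {}\<close> bdd_S \<open>e > 0\<close> by (meson cInf_less_iff less_add_same_cancel1)
    then show ?thesis
      by (auto simp: S_def elim: eventually_mono)
  qed
  show "frequently (\<lambda>n. Inf S - e < u n) sequentially" if "e > 0" for e
  proof (rule ccontr)
    assume "\<not> ?thesis"
    then have "Inf S - e \<in> S"
      by (simp add: S_def not_frequently not_less)
    then have "Inf S \<le> Inf S - e"
      using bdd_S by (rule cInf_lower)
    with \<open>e > 0\<close> show False by simp
  qed
qed

locale renewal_seq =
  fixes a u :: "nat \<Rightarrow> real"
  assumes a0: "a 0 = 1" and a_dec: "decseq a" and a_lim: "a \<longlonglongrightarrow> 0"
    and convolution: "\<And>n. (\<Sum>i\<le>n. a i * u (n - i)) = 1"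
begin

lemma a_nonneg: "0 \<le> a n"
  using decseq_ge[OF a_dec a_lim] .

lemma a_Suc_le: "a (Suc n) \<le> a n"
  using a_dec by (simp add: decseq_Suc_iff)

lemma sum_a_diff: "m \<le> n \<Longrightarrow> (\<Sum>i=m..<n. a i - a (Suc i)) = a m - a n"
  using sum_Suc_diff'[of m n "\<lambda>i. - a i"] by simp

lemma recurrence: "u (Suc m) = (\<Sum>i\<le>m. (a i - a (Suc i)) * u (m - i))"
proof -
  have "1 = a 0 * u (Suc m) + (\<Sum>i\<le>m. a (Suc i) * u (m - i))"
    using convolution[of "Suc m"] by (simp only: sum.atMost_Suc_shift diff_Suc_Suc diff_zero)
  then have "u (Suc m) = (\<Sum>i\<le>m. a i * u (m - i)) - (\<Sum>i\<le>m. a (Suc i) * u (m - i))"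
    using convolution[of m] a0 by simp
  then show ?thesis
    by (simp add: sum_subtractf left_diff_distrib)
qed

lemma u_nonneg: "0 \<le> u n"
proof (induction n rule: less_induct)
  case (less n)
  show ?case
  proof (cases n)
    case 0
    then show ?thesis using convolution[of 0] a0 by simp
  next
    case (Suc m)
    then show ?thesis
      using recurrence[of m] less a_Suc_le by (auto intro!: sum_nonneg)
  qed
qed

lemma u_le_1: "u n \<le> 1"
proof -
  have "a 0 * u (n - 0) \<le> (\<Sum>i\<le>n. a i * u (n - i))"
    by (rule member_le_sum) (use a_nonneg u_nonneg in auto)
  then show ?thesis using convolution[of n] a0 by simp
qed

lemma eventually_step_bound:
  assumes e: "e > 0" and L: "L \<ge> 0" and upper: "eventually (\<lambda>n. u n \<le> L + e) sequentially"
  shows "eventually (\<lambda>m. u (Suc m) \<le> (1 - a 1) * u m + a 1 * (L + e) + e) sequentially"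
proof -
  obtain N where N: "\<And>n. n \<ge> N \<Longrightarrow> u n \<le> L + e"
    using upper by (auto simp: eventually_sequentially)
  obtain M where M: "\<And>n. n \<ge> M \<Longrightarrow> a n < e"
    using order_tendstoD(2)[OF a_lim e] by (auto simp: eventually_sequentially)
  define d where "d i = a i - a (Suc i)" for i
  have d_nonneg: "d i \<ge> 0" for i
    using a_Suc_le by (simp add: d_def)
  show ?thesis unfolding eventually_sequentially
  proof (intro exI allI impI)
    fix m assume m: "m \<ge> N + M"
    \<comment> \<open>Old terms \<open>u (m - i)\<close> with \<open>m - i < N\<close> are only bounded by 1, but their total weight
      is \<open>a (Suc (m - N)) - a (Suc m) < e\<close>.\<close>
    have termwise: "d i * u (m - i) \<le> d i * (L + e) + (if m - N < i then d i else 0)" for i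
    proof (cases "m - N < i")
      case True
      have "d i * u (m - i) \<le> d i" using d_nonneg u_le_1 mult_left_le by blast
      moreover have "0 \<le> d i * (L + e)" using d_nonneg[of i] L e by simp
      ultimately show ?thesis using True by simp
    next
      case False
      then have "u (m - i) \<le> L + e" using N m by auto
      with False show ?thesis using d_nonneg by (simp add: mult_left_mono)
    qed
    have "(\<Sum>i=1..m. d i * u (m - i))
        \<le> (\<Sum>i=1..m. d i * (L + e) + (if m - N < i then d i else 0))"
      by (intro sum_mono termwise)
    also have "\<dots> = (\<Sum>i=1..m. d i) * (L + e) + (\<Sum>i\<in>{1..m} \<inter> {i. m - N < i}. d i)"
      by (simp add: sum.distrib sum_distrib_right sum.If_cases)
    also have "{1..m} \<inter> {i. m - N < i} = {Suc (m - N)..<Suc m}"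
      using m by auto
    also have "(\<Sum>i=1..m. d i) = a 1 - a (Suc m)"
      using sum_a_diff[of 1 "Suc m"] by (simp add: d_def atLeastLessThanSuc_atLeastAtMost)
    also have "(\<Sum>i\<in>{Suc (m - N)..<Suc m}. d i) = a (Suc (m - N)) - a (Suc m)"
      using sum_a_diff[of "Suc (m - N)" "Suc m"] by (simp add: d_def)
    finally have tail: "(\<Sum>i=1..m. d i * u (m - i))
        \<le> (a 1 - a (Suc m)) * (L + e) + (a (Suc (m - N)) - a (Suc m))" .
    have "(a 1 - a (Suc m)) * (L + e) \<le> a 1 * (L + e)"
      using a_nonneg[of "Suc m"] L e by (intro mult_right_mono) auto
    moreover have "a (Suc (m - N)) < e"
      using M m by auto
    moreover have "u (Suc m) = (1 - a 1) * u m + (\<Sum>i=1..m. d i * u (m - i))"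
      using recurrence[of m] a0 by (simp add: d_def atMost_atLeast0 sum.atLeast_Suc_atMost)
    ultimately show "u (Suc m) \<le> (1 - a 1) * u m + a 1 * (L + e) + e"
      using tail a_nonneg[of "Suc m"] by linarith
  qed
qed

context
  fixes L :: real
  assumes a1: "a 1 < 1" and L_nonneg: "L \<ge> 0"
    and upper: "\<And>e. e > 0 \<Longrightarrow> eventually (\<lambda>n. u n \<le> L + e) sequentially"
    and lower: "\<And>e. e > 0 \<Longrightarrow> frequently (\<lambda>n. L - e < u n) sequentially"
begin

lemma frequently_window_near_limsup:
  assumes "e > 0"
  shows "frequently (\<lambda>n. k \<le> n \<and> (\<forall>i\<le>k. L - e \<le> u (n - i))) sequentially"
  using assms
proof (induction k arbitrary: e)
  case 0
  show ?case
    using lower[OF 0] by (auto elim: frequently_elim1)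
next
  case (Suc k)
  define c where "c = 1 - a 1"
  have c: "0 < c" "c \<le> 1"
    using a1 a_nonneg[of 1] by (auto simp: c_def)
  define f where "f = c * e / 3"
  have f: "0 < f" "f \<le> e"
    using c Suc.prems by (auto simp: f_def)
  obtain M where M: "\<And>m. m \<ge> M \<Longrightarrow> u (Suc m) \<le> c * u m + (1 - c) * (L + f) + f"
    using eventually_step_bound[OF f(1) L_nonneg upper[OF f(1)]]
    by (auto simp: c_def eventually_sequentially)
  have "frequently (\<lambda>n. Suc k + M \<le> n \<and> k \<le> n \<and> (\<forall>i\<le>k. L - f \<le> u (n - i))) sequentially"
    using frequently_eventually_conj[OF Suc.IH[OF f(1)] eventually_ge_at_top] by simp
  then show ?case
  proof (rule frequently_elim1)
    fix n assume n: "Suc k + M \<le> n \<and> k \<le> n \<and> (\<forall>i\<le>k. L - f \<le> u (n - i))"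
    have "L - f \<le> u (Suc (n - Suc k))"
      using n Suc_diff_Suc[of k n] by auto
    also have "\<dots> \<le> c * u (n - Suc k) + (1 - c) * (L + f) + f"
      using M n by auto
    finally have "c * L \<le> c * u (n - Suc k) + 3 * f - c * f"
      by (simp add: algebra_simps)
    moreover have "0 \<le> c * f" "3 * f = c * e"
      using c f by (simp_all add: f_def)
    ultimately have "c * (L - e) \<le> c * u (n - Suc k)"
      by (simp add: algebra_simps)
    then have "L - e \<le> u (n - Suc k)"
      using c by simp
    moreover have "L - e \<le> u (n - i)" if "i \<le> k" for i
      using n that f by force
    ultimately show "Suc k \<le> n \<and> (\<forall>i\<le>Suc k. L - e \<le> u (n - i))"
      using n by (auto simp: le_Suc_eq)
  qed
qed

lemma limsup_eq_0:
  assumes "\<not> summable a"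
  shows "L = 0"
proof (rule ccontr)
  assume "L \<noteq> 0"
  with L_nonneg have L: "L > 0" by simp
  obtain K where K: "(\<Sum>i<K. a i) > 2 / L"
    using assms summableI_nonneg_bounded[of a "2 / L"] a_nonneg by (meson not_le)
  obtain n where n: "K \<le> n" "\<And>i. i \<le> K \<Longrightarrow> L / 2 \<le> u (n - i)"
    using frequently_ex[OF frequently_window_near_limsup[of "L / 2" K]] L by auto
  have "2 / L * (L / 2) < (\<Sum>i<K. a i) * (L / 2)"
    using K L by (intro mult_strict_right_mono) auto
  also have "\<dots> = (\<Sum>i<K. a i * (L / 2))"
    by (simp add: sum_distrib_right)
  also have "\<dots> \<le> (\<Sum>i<K. a i * u (n - i))"
    using n a_nonneg by (intro sum_mono mult_left_mono) auto
  also have "\<dots> \<le> (\<Sum>i\<le>n. a i * u (n - i))"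
    using n a_nonneg u_nonneg by (intro sum_mono2) auto
  also have "\<dots> = 1"
    by (rule convolution)
  finally show False
    using L by simp
qed

end

theorem tendsto_zero:
  assumes "a 1 < 1" and "\<not> summable a"
  shows "u \<longlonglongrightarrow> 0"
proof -
  have "bdd_above (range u)"
    using u_le_1 by (auto simp: bdd_above_def)
  then obtain L where L: "L \<ge> 0"
    and upper: "\<And>e. e > 0 \<Longrightarrow> eventually (\<lambda>n. u n \<le> L + e) sequentially"
    and lower: "\<And>e. e > 0 \<Longrightarrow> frequently (\<lambda>n. L - e < u n) sequentially"
    using nonneg_bounded_seq_limsup u_nonneg by blast
  have "L = 0"
    using limsup_eq_0[OF assms(1) L upper lower assms(2)] .
  show ?thesis
  proof (rule order_tendstoI)
    show "eventually (\<lambda>n. y < u n) sequentially" if "y < 0" for y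
      using that u_nonneg by (auto intro: always_eventually less_le_trans)
    show "eventually (\<lambda>n. u n < y) sequentially" if "y > 0" for y
      using upper[of "y / 2"] that \<open>L = 0\<close> by (auto elim: eventually_mono)
  qed
qed

end

theorem corollary1:
  fixes a :: "nat \<Rightarrow> real"
  assumes a0: "a 0 = 1"
    and a01: "a 0 > a 1"
    and mono: "\<And>k. k \<ge> 1 \<Longrightarrow> a k \<ge> a (Suc k)"
    and lim: "a \<longlonglongrightarrow> 0"
    and div: "\<not> summable a"
  shows "inv_toeplitz_seq a \<longlonglongrightarrow> 0"
proof -
  define u where "u n = (\<Sum>j\<le>n. inv_toeplitz_seq a j)" for n
  have "decseq a"
  proof (rule decseq_SucI)
    show "a (Suc k) \<le> a k" for k
      using a01 mono[of k] by (cases k) auto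
  qed
  then interpret renewal_seq a u
    using a0 lim convolution_partial_sums_inv_toeplitz_seq[of a n for n]
    by unfold_locales (simp_all add: u_def)
  have "u \<longlonglongrightarrow> 0"
    using tendsto_zero a01 a0 div by simp
  then have "(\<lambda>n. u (Suc n) - u n) \<longlonglongrightarrow> 0 - 0"
    by (intro tendsto_diff LIMSEQ_Suc)
  then have "(\<lambda>n. inv_toeplitz_seq a (Suc n)) \<longlonglongrightarrow> 0"
    by (simp add: u_def)
  then show ?thesis
    by (rule LIMSEQ_imp_Suc)
qed

end
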